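(* Let $\sigma^{11},\sigma^{22}$ be sufficiently smooth functions on $\overline\Omega$ (say in $W^{3,\infty}(\Omega)$) and define, for $0\le i\le n_x-1$, $0\le j\le n_y-1$, $$\tilde\sigma^{kk}_{i+1/2,j+1/2}=\sigma^{kk}_{i+1/2,j+1/2}-\frac{h_{i+1/2}^2}{8}\Big(\frac{\partial^2\sigma^{kk}}{\partial x^2}\Big)_{i+1/2,j+1/2}-\frac{l_{j+1/2}^2}{8}\Big(\frac{\partial^2\sigma^{kk}}{\partial y^2}\Big)_{i+1/2,j+1/2},\quad k=1,2.$$ Then $$\Big(\frac{\partial\sigma^{11}}{\partial x}\Big)_{i,j+1/2}=[D_x\tilde\sigma^{11}]_{i,j+1/2}+\epsilon^x_{i,j+1/2}(\sigma^{11}),\quad 1\le i\le n_x-1,\ 0\le j\le n_y-1,$$ $$\Big(\frac{\partial\sigma^{22}}{\partial y}\Big)_{i+1/2,j}=[D_y\tilde\sigma^{22}]_{i+1/2,j}+\epsilon^y_{i+1/2,j}(\sigma^{22}),\quad 0\le i\le n_x-1,\ 1\le j\le n_y-1,$$ where $|\epsilon^x_{i,j+1/2}(\sigma^{11})|\le C(h^2+l^2)\|\sigma^{11}\|_{3,\infty}$ and $|\epsilon^y_{i+1/2,j}(\sigma^{22})|\le C(h^2+l^2)\|\sigma^{22}\|_{3,\infty}$ with $C$ an absolute constant independent of the grid.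
   Context: Grid on $\Omega=(0,a)\times(0,b)$: $0=x_0<\dots<x_{n_x}=a$, $0=y_0<\dots<y_{n_y}=b$, $x_{i+1/2}=(x_i+x_{i+1})/2$, $h_{i+1/2}=x_{i+1}-x_i$, $h_i=(h_{i-1/2}+h_{i+1/2})/2$, $h=\max_i h_{i+1/2}$; analogously $y_{j+1/2}$, $l_{j+1/2}=y_{j+1}-y_j$, $l_j=(l_{j-1/2}+l_{j+1/2})/2$, $l=\max_j l_{j+1/2}$. For a function $\phi$, $\phi_{\alpha,\beta}=\phi(x_\alpha,y_\beta)$. $[D_x\phi]_{i,m}=(\phi_{i+1/2,m}-\phi_{i-1/2,m})/h_i$, $[D_y\phi]_{k,j}=(\phi_{k,j+1/2}-\phi_{k,j-1/2})/l_j$ for interior indices. $\|\cdot\|_{3,\infty}$ denotes the $W^{3,\infty}(\Omega)$ norm (maximum of sup norms of all partial derivatives of order at most 3). *)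

theory Defs
  imports "HOL-Analysis.Analysis"
begin

datatype dir = Dx | Dy

definition pdx :: "(real \<times> real \<Rightarrow> real) \<Rightarrow> real \<times> real \<Rightarrow> real" where
  "pdx f = (\<lambda>p. deriv (\<lambda>t. f (t, snd p)) (fst p))"

definition pdy :: "(real \<times> real \<Rightarrow> real) \<Rightarrow> real \<times> real \<Rightarrow> real" where
  "pdy f = (\<lambda>p. deriv (\<lambda>t. f (fst p, t)) (snd p))"

fun dop :: "dir \<Rightarrow> (real \<times> real \<Rightarrow> real) \<Rightarrow> real \<times> real \<Rightarrow> real" where
  "dop Dx f = pdx f"
| "dop Dy f = pdy f"

fun pd :: "dir list \<Rightarrow> (real \<times> real \<Rightarrow> real) \<Rightarrow> real \<times> real \<Rightarrow> real" where
  "pd [] f = f"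
| "pd (d # w) f = dop d (pd w f)"

definition Omega :: "real \<Rightarrow> real \<Rightarrow> (real \<times> real) set" where
  "Omega a b = {0<..<a} \<times> {0<..<b}"

definition smooth3 :: "real \<Rightarrow> real \<Rightarrow> (real \<times> real \<Rightarrow> real) \<Rightarrow> bool" where
  "smooth3 a b f \<longleftrightarrow>
     (\<forall>w. length w \<le> 2 \<longrightarrow> (\<forall>p\<in>Omega a b. pd w f differentiable (at p))) \<and>
     (\<forall>w. length w \<le> 3 \<longrightarrow> continuous_on (Omega a b) (pd w f)) \<and>
     (\<forall>w. length w \<le> 3 \<longrightarrow> bounded (pd w f ` Omega a b))"

definition norm3inf :: "real \<Rightarrow> real \<Rightarrow> (real \<times> real \<Rightarrow> real) \<Rightarrow> real" where
  "norm3inf a b f = Sup ((\<lambda>(w, p). \<bar>pd w f p\<bar>) ` ({w. length w \<le> 3} \<times> Omega a b))"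

definition is_grid :: "real \<Rightarrow> nat \<Rightarrow> (nat \<Rightarrow> real) \<Rightarrow> bool" where
  "is_grid a n x \<longleftrightarrow> n \<ge> 1 \<and> x 0 = 0 \<and> x n = a \<and> (\<forall>i<n. x i < x (Suc i))"

text \<open>mid x i = x_{i+1/2}, hh x i = h_{i+1/2}, hc x i = h_i (for i \<ge> 1),
  hmax n x = h = max_i h_{i+1/2}.\<close>
definition mid :: "(nat \<Rightarrow> real) \<Rightarrow> nat \<Rightarrow> real" where
  "mid x i = (x i + x (Suc i)) / 2"

definition hh :: "(nat \<Rightarrow> real) \<Rightarrow> nat \<Rightarrow> real" where
  "hh x i = x (Suc i) - x i"

definition hc :: "(nat \<Rightarrow> real) \<Rightarrow> nat \<Rightarrow> real" where
  "hc x i = (hh x (i - 1) + hh x i) / 2"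

definition hmax :: "nat \<Rightarrow> (nat \<Rightarrow> real) \<Rightarrow> real" where
  "hmax n x = Max (hh x ` {..<n})"

definition sigma_tilde ::
  "(real \<times> real \<Rightarrow> real) \<Rightarrow> (nat \<Rightarrow> real) \<Rightarrow> (nat \<Rightarrow> real) \<Rightarrow> nat \<Rightarrow> nat \<Rightarrow> real" where
  "sigma_tilde s x y i j =
     s (mid x i, mid y j)
     - (hh x i)\<^sup>2 / 8 * pd [Dx, Dx] s (mid x i, mid y j)
     - (hh y j)\<^sup>2 / 8 * pd [Dy, Dy] s (mid x i, mid y j)"

definition Dx_tilde ::
  "(real \<times> real \<Rightarrow> real) \<Rightarrow> (nat \<Rightarrow> real) \<Rightarrow> (nat \<Rightarrow> real) \<Rightarrow> nat \<Rightarrow> nat \<Rightarrow> real" where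
  "Dx_tilde s x y i j = (sigma_tilde s x y i j - sigma_tilde s x y (i - 1) j) / hc x i"

definition Dy_tilde ::
  "(real \<times> real \<Rightarrow> real) \<Rightarrow> (nat \<Rightarrow> real) \<Rightarrow> (nat \<Rightarrow> real) \<Rightarrow> nat \<Rightarrow> nat \<Rightarrow> real" where
  "Dy_tilde s x y i j = (sigma_tilde s x y i j - sigma_tilde s x y i (j - 1)) / hc y j"

end

theory Submission
  imports Defs
begin

text \<open>At a node x_i with half-steps p = h_{i-1/2}/2 and q = h_{i+1/2}/2, Taylor expansion about x_i
  shows that the corrected value f(x_i + s) - s^2/2 f''(x_i + s) equals f(x_i) + s f'(x_i) up to
  O(|s|^3): the curvature correction cancels the second-order term. Hence the difference of the
  corrected values at x_i + q and x_i - p, divided by h_i = p + q, reproduces f'(x_i) up to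
  O((p^3 + q^3)/(p + q)) = O(h^2), also on nonuniform grids. The transverse correction
  l^2/8 \<partial>_yy \<sigma> is Lipschitz along the grid line with constant \<parallel>\<sigma>\<parallel>_{3,\<infinity>},
  so it contributes O(l^2). The estimate for D_y is the one for D_x after exchanging the coordinates.\<close>

lemma Taylor_remainder_bound:
  fixes d :: "nat \<Rightarrow> real \<Rightarrow> real"
  assumes n: "0 < n"
    and deriv: "\<And>m t. m < n \<Longrightarrow> t \<in> {lo<..<hi} \<Longrightarrow> (d m has_real_derivative d (Suc m) t) (at t)"
    and bound: "\<And>t. t \<in> {lo<..<hi} \<Longrightarrow> \<bar>d n t\<bar> \<le> M"
    and x0: "x0 \<in> {lo<..<hi}" and z: "z \<in> {lo<..<hi}"
  shows "\<bar>d 0 z - (\<Sum>m<n. d m x0 / fact m * (z - x0) ^ m)\<bar> \<le> M * \<bar>z - x0\<bar> ^ n / fact n"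
proof (cases "z = x0")
  case True
  from n obtain k where "n = Suc k"
    using gr0_implies_Suc by blast
  with True show ?thesis
    by (simp add: sum.lessThan_Suc_shift)
next
  case False
  have "\<exists>t. (if z < x0 then z < t \<and> t < x0 else x0 < t \<and> t < z) \<and>
      d 0 z = (\<Sum>m<n. d m x0 / fact m * (z - x0) ^ m) + d n t / fact n * (z - x0) ^ n"
    by (rule Taylor[where a = "min z x0" and b = "max z x0"]) (use n x0 z False in \<open>auto intro!: deriv\<close>)
  then obtain t where between: "if z < x0 then z < t \<and> t < x0 else x0 < t \<and> t < z"
    and taylor: "d 0 z = (\<Sum>m<n. d m x0 / fact m * (z - x0) ^ m) + d n t / fact n * (z - x0) ^ n"
    by blast
  have t: "t \<in> {lo<..<hi}"
    using between x0 z by (auto split: if_splits)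
  have "\<bar>d 0 z - (\<Sum>m<n. d m x0 / fact m * (z - x0) ^ m)\<bar> = \<bar>d n t\<bar> * \<bar>z - x0\<bar> ^ n / fact n"
    unfolding taylor by (simp add: abs_mult power_abs)
  also have "\<dots> \<le> M * \<bar>z - x0\<bar> ^ n / fact n"
    using bound[OF t] by (intro divide_right_mono mult_right_mono) auto
  finally show ?thesis .
qed

lemma abs_diff_le_derivative_bound:
  fixes f f' :: "real \<Rightarrow> real"
  assumes deriv: "\<And>t. t \<in> {lo<..<hi} \<Longrightarrow> (f has_real_derivative f' t) (at t)"
    and bound: "\<And>t. t \<in> {lo<..<hi} \<Longrightarrow> \<bar>f' t\<bar> \<le> M"
    and x: "x \<in> {lo<..<hi}" and z: "z \<in> {lo<..<hi}"
  shows "\<bar>f z - f x\<bar> \<le> M * \<bar>z - x\<bar>"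
proof -
  define d where "d m = (if m = 0 then f else f')" for m :: nat
  have "\<bar>d 0 z - (\<Sum>m<1. d m x / fact m * (z - x) ^ m)\<bar> \<le> M * \<bar>z - x\<bar> ^ 1 / fact 1"
    by (rule Taylor_remainder_bound[where lo = lo and hi = hi]) (use deriv bound x z in \<open>auto simp: d_def\<close>)
  then show ?thesis
    by (simp add: d_def)
qed

lemma Taylor_curvature_corrected:
  fixes d :: "nat \<Rightarrow> real \<Rightarrow> real"
  assumes deriv: "\<And>m t. m < 3 \<Longrightarrow> t \<in> {lo<..<hi} \<Longrightarrow> (d m has_real_derivative d (Suc m) t) (at t)"
    and bound: "\<And>t. t \<in> {lo<..<hi} \<Longrightarrow> \<bar>d 3 t\<bar> \<le> M"
    and x0: "x0 \<in> {lo<..<hi}" and z: "x0 + s \<in> {lo<..<hi}"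
  shows "\<bar>d 0 (x0 + s) - s\<^sup>2 / 2 * d 2 (x0 + s) - d 0 x0 - s * d 1 x0\<bar> \<le> 2 / 3 * M * \<bar>s\<bar> ^ 3"
proof -
  have taylor_poly: "(\<Sum>m<3. d m x0 / fact m * (x0 + s - x0) ^ m) = d 0 x0 + s * d 1 x0 + s\<^sup>2 / 2 * d 2 x0"
    by (simp add: eval_nat_numeral)
  have fact_3: "(fact 3 :: real) = 6"
    by (simp add: eval_nat_numeral)
  have "\<bar>d 0 (x0 + s) - (\<Sum>m<3. d m x0 / fact m * (x0 + s - x0) ^ m)\<bar> \<le> M * \<bar>x0 + s - x0\<bar> ^ 3 / fact 3"
    by (rule Taylor_remainder_bound[OF _ deriv bound x0 z]) simp
  then have remainder:
    "\<bar>d 0 (x0 + s) - (d 0 x0 + s * d 1 x0 + s\<^sup>2 / 2 * d 2 x0)\<bar> \<le> M * \<bar>s\<bar> ^ 3 / 6"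
    unfolding taylor_poly fact_3 by simp
  have "\<bar>d 2 (x0 + s) - d 2 x0\<bar> \<le> M * \<bar>s\<bar>"
    using abs_diff_le_derivative_bound[of lo hi "d 2" "d 3" M, OF _ bound x0 z] deriv[of 2] by simp
  then have "s\<^sup>2 / 2 * \<bar>d 2 (x0 + s) - d 2 x0\<bar> \<le> s\<^sup>2 / 2 * (M * \<bar>s\<bar>)"
    by (rule mult_left_mono) simp
  then have "\<bar>s\<^sup>2 / 2 * (d 2 (x0 + s) - d 2 x0)\<bar> \<le> s\<^sup>2 / 2 * (M * \<bar>s\<bar>)"
    by (simp add: abs_mult)
  also have "\<dots> = M * \<bar>s\<bar> ^ 3 / 2"
    by (simp add: power2_eq_square power3_eq_cube)
  finally have curvature: "\<bar>s\<^sup>2 / 2 * (d 2 (x0 + s) - d 2 x0)\<bar> \<le> M * \<bar>s\<bar> ^ 3 / 2" .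
  have "d 0 (x0 + s) - s\<^sup>2 / 2 * d 2 (x0 + s) - d 0 x0 - s * d 1 x0
      = (d 0 (x0 + s) - (d 0 x0 + s * d 1 x0 + s\<^sup>2 / 2 * d 2 x0)) - s\<^sup>2 / 2 * (d 2 (x0 + s) - d 2 x0)"
    by (simp add: algebra_simps)
  then have "\<bar>d 0 (x0 + s) - s\<^sup>2 / 2 * d 2 (x0 + s) - d 0 x0 - s * d 1 x0\<bar>
      \<le> \<bar>d 0 (x0 + s) - (d 0 x0 + s * d 1 x0 + s\<^sup>2 / 2 * d 2 x0)\<bar> + \<bar>s\<^sup>2 / 2 * (d 2 (x0 + s) - d 2 x0)\<bar>"
    by (metis abs_triangle_ineq4)
  also have "\<dots> \<le> M * \<bar>s\<bar> ^ 3 / 6 + M * \<bar>s\<bar> ^ 3 / 2"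
    using remainder curvature by (rule add_mono)
  also have "\<dots> = 2 / 3 * M * \<bar>s\<bar> ^ 3"
    by simp
  finally show ?thesis .
qed

lemma corrected_difference_quotient_error:
  fixes d :: "nat \<Rightarrow> real \<Rightarrow> real" and g g' :: "real \<Rightarrow> real"
  assumes deriv: "\<And>m t. m < 3 \<Longrightarrow> t \<in> {lo<..<hi} \<Longrightarrow> (d m has_real_derivative d (Suc m) t) (at t)"
    and bound: "\<And>t. t \<in> {lo<..<hi} \<Longrightarrow> \<bar>d 3 t\<bar> \<le> M"
    and g_deriv: "\<And>t. t \<in> {lo<..<hi} \<Longrightarrow> (g has_real_derivative g' t) (at t)"
    and g'_bound: "\<And>t. t \<in> {lo<..<hi} \<Longrightarrow> \<bar>g' t\<bar> \<le> M"
    and left: "xi - p \<in> {lo<..<hi}" and right: "xi + q \<in> {lo<..<hi}"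
    and p: "0 < p" "2 * p \<le> h" and q: "0 < q" "2 * q \<le> h"
    and A: "0 \<le> A" "A \<le> l\<^sup>2 / 8"
  shows "\<bar>d 1 xi - ((d 0 (xi + q) - q\<^sup>2 / 2 * d 2 (xi + q) - A * g (xi + q))
                    - (d 0 (xi - p) - p\<^sup>2 / 2 * d 2 (xi - p) - A * g (xi - p))) / (p + q)\<bar>
         \<le> (h\<^sup>2 + l\<^sup>2) * M" (is "\<bar>_ - ?N / _\<bar> \<le> _")
proof -
  have xi: "xi \<in> {lo<..<hi}"
    using left right p q by auto
  have M: "0 \<le> M"
    using bound[OF xi] by linarith
  define R where "R = d 0 (xi + q) - q\<^sup>2 / 2 * d 2 (xi + q) - d 0 xi - q * d 1 xi"
  define L where "L = d 0 (xi - p) - p\<^sup>2 / 2 * d 2 (xi - p) - d 0 xi + p * d 1 xi"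
  define G where "G = g (xi + q) - g (xi - p)"
  have R: "\<bar>R\<bar> \<le> 2 / 3 * M * q ^ 3"
    using Taylor_curvature_corrected[OF deriv bound xi right] q by (simp add: R_def)
  have L: "\<bar>L\<bar> \<le> 2 / 3 * M * p ^ 3"
    using Taylor_curvature_corrected[OF deriv bound xi, of "- p"] left p by (simp add: L_def)
  have "\<bar>G\<bar> \<le> M * (p + q)"
    using abs_diff_le_derivative_bound[OF g_deriv g'_bound left right] p q by (simp add: G_def add.commute)
  then have AG: "\<bar>A * G\<bar> \<le> l\<^sup>2 / 8 * (M * (p + q))"
    unfolding abs_mult abs_of_nonneg[OF A(1)] using A M p q by (intro mult_mono) auto
  have cube: "t ^ 3 \<le> t * (h\<^sup>2 / 4)" if "0 < t" "2 * t \<le> h" for t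
  proof -
    have "t\<^sup>2 \<le> (h / 2)\<^sup>2"
      using that by (intro power_mono) auto
    then have "t * t\<^sup>2 \<le> t * (h / 2)\<^sup>2"
      using that by (intro mult_left_mono) auto
    then show ?thesis
      by (simp add: power_divide power2_eq_square power3_eq_cube)
  qed
  define E where "E = d 1 xi - ?N / (p + q)"
  have "E * (p + q) = - (?N - (p + q) * d 1 xi)"
    using p q by (simp add: E_def field_simps)
  also have "?N - (p + q) * d 1 xi = R - L - A * G"
    by (simp add: R_def L_def G_def algebra_simps)
  finally have "\<bar>E\<bar> * (p + q) = \<bar>R - L - A * G\<bar>"
    using p q by (metis abs_minus_cancel abs_mult abs_of_pos add_pos_pos)
  also have "\<dots> \<le> 2 / 3 * M * q ^ 3 + 2 / 3 * M * p ^ 3 + l\<^sup>2 / 8 * (M * (p + q))"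
    using R L AG by linarith
  also have "\<dots> \<le> 2 / 3 * M * (q * (h\<^sup>2 / 4)) + 2 / 3 * M * (p * (h\<^sup>2 / 4)) + l\<^sup>2 / 8 * (M * (p + q))"
  proof -
    have "2 / 3 * M * q ^ 3 \<le> 2 / 3 * M * (q * (h\<^sup>2 / 4))" "2 / 3 * M * p ^ 3 \<le> 2 / 3 * M * (p * (h\<^sup>2 / 4))"
      using cube[OF q] cube[OF p] M by (intro mult_left_mono; simp)+
    then show ?thesis
      by linarith
  qed
  also have "\<dots> = (p + q) * (M * (h\<^sup>2 / 6 + l\<^sup>2 / 8))"
    by (simp add: field_simps)
  also have "\<dots> \<le> (p + q) * (M * (h\<^sup>2 + l\<^sup>2))"
  proof -
    have "h\<^sup>2 / 6 + l\<^sup>2 / 8 \<le> h\<^sup>2 + l\<^sup>2"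
      using zero_le_power2[of h] zero_le_power2[of l] by linarith
    then show ?thesis
      using M p q by (intro mult_left_mono) auto
  qed
  finally have "\<bar>E\<bar> * (p + q) \<le> (h\<^sup>2 + l\<^sup>2) * M * (p + q)"
    by (simp add: mult_ac)
  then show ?thesis
    unfolding E_def using p q by simp
qed

lemma has_real_derivative_pdx:
  assumes "f differentiable (at (t, y))"
  shows "((\<lambda>t. f (t, y)) has_real_derivative pdx f (t, y)) (at t)"
proof -
  have "(\<lambda>t. (t, y)) differentiable (at t)"
    by (auto intro!: derivative_intros simp: differentiable_def)
  then have "(f \<circ> (\<lambda>t. (t, y))) differentiable (at t)"
    using assms by (intro differentiable_chain_at) simp_all
  then have "(\<lambda>t. f (t, y)) differentiable (at t)"
    by (simp add: o_def)
  then show ?thesis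
    by (simp add: pdx_def DERIV_deriv_iff_real_differentiable)
qed

lemma pd_line_has_real_derivative:
  assumes "smooth3 a b s" and "y \<in> {0<..<b}" and "length w \<le> 2" and "t \<in> {0<..<a}"
  shows "((\<lambda>t. pd w s (t, y)) has_real_derivative pd (Dx # w) s (t, y)) (at t)"
  using assms by (auto simp: smooth3_def Omega_def intro!: has_real_derivative_pdx)

lemma finite_dir_words: "finite {w :: dir list. length w \<le> n}"
proof -
  have "(UNIV :: dir set) = {Dx, Dy}"
    using dir.exhaust by auto
  then have "finite (UNIV :: dir set)"
    by (metis finite.emptyI finite.insertI)
  then show ?thesis
    using finite_lists_length_le[of "UNIV :: dir set" n] by simp
qed

lemma abs_pd_le_norm3inf:
  assumes s: "smooth3 a b s" and p: "p \<in> Omega a b" and w: "length w \<le> 3"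
  shows "\<bar>pd w s p\<bar> \<le> norm3inf a b s"
proof -
  let ?W = "{w :: dir list. length w \<le> 3}"
  have "bdd_above ((\<lambda>p. \<bar>pd w s p\<bar>) ` Omega a b)" if "w \<in> ?W" for w
  proof -
    have "bounded (pd w s ` Omega a b)"
      using s that by (auto simp: smooth3_def)
    then obtain B where "\<forall>z \<in> pd w s ` Omega a b. norm z \<le> B"
      by (auto simp: bounded_iff)
    then show ?thesis
      by (auto simp: bdd_above_def)
  qed
  then have "bdd_above (\<Union>w\<in>?W. (\<lambda>p. \<bar>pd w s p\<bar>) ` Omega a b)"
    using finite_dir_words by simp
  moreover have "(\<lambda>(w, p). \<bar>pd w s p\<bar>) ` (?W \<times> Omega a b) = (\<Union>w\<in>?W. (\<lambda>p. \<bar>pd w s p\<bar>) ` Omega a b)"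
    by auto
  ultimately show ?thesis
    unfolding norm3inf_def using p w by (intro cSup_upper) force+
qed

lemma is_grid_mono:
  assumes x: "is_grid a n x" and "k \<le> m" "m \<le> n"
  shows "x k \<le> x m"
  using assms(2,3)
proof (induction m rule: dec_induct)
  case (step j)
  then have "x k \<le> x j" "x j < x (Suc j)"
    using x by (simp_all add: is_grid_def)
  then show ?case
    by linarith
qed simp

lemma is_grid_bounds:
  assumes x: "is_grid a n x" and "k \<le> n"
  shows "0 \<le> x k" "x k \<le> a"
  using is_grid_mono[OF x, of 0 k] is_grid_mono[OF x, of k n] x assms(2)
  by (auto simp: is_grid_def)

lemma hh_pos: "is_grid a n x \<Longrightarrow> k < n \<Longrightarrow> 0 < hh x k"
  by (simp add: is_grid_def hh_def)

lemma hh_le_hmax: "k < n \<Longrightarrow> hh x k \<le> hmax n x"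
  unfolding hmax_def by (intro Max_ge) auto

lemma mid_in_interval: "is_grid a n x \<Longrightarrow> k < n \<Longrightarrow> mid x k \<in> {0<..<a}"
  using is_grid_bounds[of a n x k] is_grid_bounds[of a n x "Suc k"] hh_pos[of a n x k]
  by (auto simp: mid_def hh_def)

lemma Dx_tilde_error:
  assumes s: "smooth3 a b s" and x: "is_grid a nx x" and y: "is_grid b ny y"
    and i: "1 \<le> i" "i < nx" and j: "j < ny"
  shows "\<bar>pd [Dx] s (x i, mid y j) - Dx_tilde s x y i j\<bar>
           \<le> ((hmax nx x)\<^sup>2 + (hmax ny y)\<^sup>2) * norm3inf a b s"
proof -
  define y0 where "y0 = mid y j"
  define d where "d m = (\<lambda>t. pd (replicate m Dx) s (t, y0))" for m
  define p where "p = hh x (i - 1) / 2"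
  define q where "q = hh x i / 2"
  have y0: "y0 \<in> {0<..<b}"
    using mid_in_interval[OF y j] by (simp add: y0_def)
  note line_deriv = pd_line_has_real_derivative[OF s y0]
  have line_bound: "\<bar>pd w s (t, y0)\<bar> \<le> norm3inf a b s" if "length w \<le> 3" "t \<in> {0<..<a}" for w t
    using abs_pd_le_norm3inf[OF s _ that(1)] that(2) y0 by (simp add: Omega_def)
  have i': "i - 1 < nx" "Suc (i - 1) = i"
    using i by auto
  have hh: "hh x i = 2 * q" "hh x (i - 1) = 2 * p"
    by (simp_all add: p_def q_def)
  have mid: "mid x i = x i + q" "mid x (i - 1) = x i - p"
    using i'(2) by (simp_all add: mid_def p_def q_def hh_def field_simps)
  have "0 \<le> hh y j"
    using hh_pos[OF y j] by simp
  then have A: "(hh y j)\<^sup>2 / 8 \<le> (hmax ny y)\<^sup>2 / 8"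
    using hh_le_hmax[OF j] by (simp add: power_mono)
  have "\<bar>d 1 (x i) - ((d 0 (x i + q) - q\<^sup>2 / 2 * d 2 (x i + q) - (hh y j)\<^sup>2 / 8 * pd [Dy, Dy] s (x i + q, y0))
                    - (d 0 (x i - p) - p\<^sup>2 / 2 * d 2 (x i - p) - (hh y j)\<^sup>2 / 8 * pd [Dy, Dy] s (x i - p, y0))) / (p + q)\<bar>
         \<le> ((hmax nx x)\<^sup>2 + (hmax ny y)\<^sup>2) * norm3inf a b s"
  proof (rule corrected_difference_quotient_error)
    show "(d m has_real_derivative d (Suc m) t) (at t)" if "m < 3" "t \<in> {0<..<a}" for m t
      using line_deriv[of "replicate m Dx" t] that by (simp add: d_def)
    show "\<bar>d 3 t\<bar> \<le> norm3inf a b s" if "t \<in> {0<..<a}" for t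
      using line_bound[of "replicate 3 Dx" t] that by (simp add: d_def)
    show "((\<lambda>t. pd [Dy, Dy] s (t, y0)) has_real_derivative pd [Dx, Dy, Dy] s (t, y0)) (at t)"
      if "t \<in> {0<..<a}" for t
      using line_deriv[of "[Dy, Dy]" t] that by simp
    show "\<bar>pd [Dx, Dy, Dy] s (t, y0)\<bar> \<le> norm3inf a b s" if "t \<in> {0<..<a}" for t
      using line_bound[of "[Dx, Dy, Dy]" t] that by simp
    show "x i - p \<in> {0<..<a}" "x i + q \<in> {0<..<a}"
      using mid_in_interval[OF x i'(1)] mid_in_interval[OF x i(2)] mid by simp_all
    show "0 < p" "0 < q"
      using hh_pos[OF x i'(1)] hh_pos[OF x i(2)] by (simp_all add: p_def q_def)
    show "2 * p \<le> hmax nx x" "2 * q \<le> hmax nx x"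
      using hh_le_hmax[OF i'(1)] hh_le_hmax[OF i(2)] by (simp_all add: p_def q_def)
  qed (use A in simp_all)
  moreover have "hc x i = p + q"
    by (simp add: hc_def p_def q_def)
  moreover have "d 0 = (\<lambda>t. s (t, y0))" "d 1 = (\<lambda>t. pd [Dx] s (t, y0))" "d 2 = (\<lambda>t. pd [Dx, Dx] s (t, y0))"
    by (simp_all add: d_def numeral_2_eq_2)
  ultimately show ?thesis
    unfolding Dx_tilde_def sigma_tilde_def mid hh by (simp add: y0_def power_mult_distrib)
qed

fun dir_transpose :: "dir \<Rightarrow> dir" where
  "dir_transpose Dx = Dy"
| "dir_transpose Dy = Dx"

lemma dir_transpose_involutive [simp]: "dir_transpose (dir_transpose d) = d"
  by (cases d) simp_all

lemma pd_comp_swap: "pd w (f \<circ> prod.swap) = pd (map dir_transpose w) f \<circ> prod.swap"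
proof (induction w)
  case (Cons d w)
  then show ?case
    by (cases d) (simp_all add: pdx_def pdy_def comp_def)
qed simp

lemma Omega_swap: "prod.swap ` Omega a b = Omega b a"
  by (simp add: Omega_def product_swap)

lemma smooth3_comp_swap:
  assumes "smooth3 a b f"
  shows "smooth3 b a (f \<circ> prod.swap)"
proof -
  have swap_differentiable: "prod.swap differentiable (at p)" for p :: "real \<times> real"
  proof -
    have swap_eq: "prod.swap = (\<lambda>p :: real \<times> real. (snd p, fst p))"
      by (simp add: fun_eq_iff)
    have "(prod.swap has_derivative prod.swap) (at p)"
      unfolding swap_eq by (auto intro!: derivative_eq_intros)
    then show ?thesis
      by (auto simp: differentiable_def)
  qed
  show ?thesis
    unfolding smooth3_def pd_comp_swap
  proof (intro conjI allI impI ballI)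
    fix w :: "dir list" and p
    assume "length w \<le> 2" "p \<in> Omega b a"
    moreover have "prod.swap p \<in> Omega a b"
      using \<open>p \<in> Omega b a\<close> Omega_swap[of b a] by blast
    ultimately have "pd (map dir_transpose w) f differentiable (at (prod.swap p))"
      using assms by (simp add: smooth3_def)
    then show "(pd (map dir_transpose w) f \<circ> prod.swap) differentiable (at p)"
      using swap_differentiable by (intro differentiable_chain_at)
  next
    fix w :: "dir list"
    assume "length w \<le> 3"
    then have cont: "continuous_on (Omega a b) (pd (map dir_transpose w) f)"
      and bnd: "bounded (pd (map dir_transpose w) f ` Omega a b)"
      using assms by (auto simp: smooth3_def)
    show "continuous_on (Omega b a) (pd (map dir_transpose w) f \<circ> prod.swap)"
      by (rule continuous_on_compose[OF continuous_on_swap]) (simp add: Omega_swap cont)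
    show "bounded ((pd (map dir_transpose w) f \<circ> prod.swap) ` Omega b a)"
      unfolding image_comp[symmetric] Omega_swap by (rule bnd)
  qed
qed

lemma norm3inf_comp_swap: "norm3inf b a (f \<circ> prod.swap) = norm3inf a b f"
proof -
  let ?W = "{w :: dir list. length w \<le> 3}"
  have "map dir_transpose ` ?W = ?W"
  proof
    show "map dir_transpose ` ?W \<subseteq> ?W"
      by auto
    show "?W \<subseteq> map dir_transpose ` ?W"
    proof
      fix w
      assume "w \<in> ?W"
      then show "w \<in> map dir_transpose ` ?W"
        by (intro image_eqI[of _ _ "map dir_transpose w"]) (simp_all add: comp_def)
    qed
  qed
  then have "map_prod (map dir_transpose) prod.swap ` (?W \<times> Omega b a) = ?W \<times> Omega a b"
    using map_prod_surj_on Omega_swap by metis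
  moreover have "(\<lambda>(w, p). \<bar>pd w (f \<circ> prod.swap) p\<bar>)
      = (\<lambda>(w, p). \<bar>pd w f p\<bar>) \<circ> map_prod (map dir_transpose) prod.swap"
    by (simp add: fun_eq_iff pd_comp_swap)
  ultimately show ?thesis
    unfolding norm3inf_def by (simp only: image_comp[symmetric])
qed

lemma Dy_tilde_eq_Dx_tilde_swap: "Dy_tilde s x y i j = Dx_tilde (s \<circ> prod.swap) y x j i"
  by (simp add: Dy_tilde_def Dx_tilde_def sigma_tilde_def pd_comp_swap algebra_simps)

lemma Dy_tilde_error:
  assumes s: "smooth3 a b s" and x: "is_grid a nx x" and y: "is_grid b ny y"
    and i: "i < nx" and j: "1 \<le> j" "j < ny"
  shows "\<bar>pd [Dy] s (mid x i, y j) - Dy_tilde s x y i j\<bar>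
           \<le> ((hmax nx x)\<^sup>2 + (hmax ny y)\<^sup>2) * norm3inf a b s"
  using Dx_tilde_error[OF smooth3_comp_swap[OF s] y x j i]
  by (simp add: Dy_tilde_eq_Dx_tilde_swap norm3inf_comp_swap pd_comp_swap add.commute)

theorem lemma4p1:
  "\<exists>C::real. \<forall>(a::real) (b::real) nx ny x y s11 s22.
     0 < a \<and> 0 < b \<and> is_grid a nx x \<and> is_grid b ny y \<and>
     smooth3 a b s11 \<and> smooth3 a b s22 \<longrightarrow>
     (\<forall>i j. 1 \<le> i \<and> i \<le> nx - 1 \<and> j \<le> ny - 1 \<longrightarrow>
        \<bar>pd [Dx] s11 (x i, mid y j) - Dx_tilde s11 x y i j\<bar>
          \<le> C * ((hmax nx x)\<^sup>2 + (hmax ny y)\<^sup>2) * norm3inf a b s11) \<and>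
     (\<forall>i j. i \<le> nx - 1 \<and> 1 \<le> j \<and> j \<le> ny - 1 \<longrightarrow>
        \<bar>pd [Dy] s22 (mid x i, y j) - Dy_tilde s22 x y i j\<bar>
          \<le> C * ((hmax nx x)\<^sup>2 + (hmax ny y)\<^sup>2) * norm3inf a b s22)"
proof (intro exI[of _ 1] allI impI conjI)
  fix a b :: real and nx ny :: nat and x y :: "nat \<Rightarrow> real" and s11 s22 :: "real \<times> real \<Rightarrow> real"
  assume "0 < a \<and> 0 < b \<and> is_grid a nx x \<and> is_grid b ny y \<and> smooth3 a b s11 \<and> smooth3 a b s22"
  then have x: "is_grid a nx x" and y: "is_grid b ny y" and s11: "smooth3 a b s11" and s22: "smooth3 a b s22"
    by auto
  have nx: "1 \<le> nx" and ny: "1 \<le> ny"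
    using x y by (simp_all add: is_grid_def)
  show "\<bar>pd [Dx] s11 (x i, mid y j) - Dx_tilde s11 x y i j\<bar>
      \<le> 1 * ((hmax nx x)\<^sup>2 + (hmax ny y)\<^sup>2) * norm3inf a b s11"
    if "1 \<le> i \<and> i \<le> nx - 1 \<and> j \<le> ny - 1" for i j
  proof -
    have "1 \<le> i" "i < nx" "j < ny"
      using that nx ny by auto
    then show ?thesis
      using Dx_tilde_error[OF s11 x y] by simp
  qed
  show "\<bar>pd [Dy] s22 (mid x i, y j) - Dy_tilde s22 x y i j\<bar>
      \<le> 1 * ((hmax nx x)\<^sup>2 + (hmax ny y)\<^sup>2) * norm3inf a b s22"
    if "i \<le> nx - 1 \<and> 1 \<le> j \<and> j \<le> ny - 1" for i j
  proof -
    have "i < nx" "1 \<le> j" "j < ny"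
      using that nx ny by auto
    then show ?thesis
      using Dy_tilde_error[OF s22 x y] by simp
  qed
qed

end
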